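(* Let $r>1$ and integers $N\ge1$, $K\ge2$, and let $\mathcal{A}=\{\emptyset,\{1\},\dots,\{N\}\}$ (single item auction). Then the worst case efficiency loss ratio with possibly different priors satisfies $$\eta(r,K;\mathcal{A})\ge\frac{\gamma^*(r,K,1)-\left(1-\frac1r\right)}{1+\gamma^*(r,K,1)},\qquad\text{where } \gamma^*(r,K,1)=(K-1)\left(1-r^{-\frac1{K-1}}\right).$$
   Context: Buyer $n\in\{1,\dots,N\}$ has type $X_n$, a discrete random variable taking values $0<x_n^1<\dots<x_n^{K_n}$ with probabilities $p_n^i>0$; $X_1,\dots,X_N$ independent. An allocation rule $\pi$ maps each bid vector $v$ ($v_n\in\{x_n^1,\dots,x_n^{K_n}\}$) to a probability distribution on $\mathcal{A}$; $Q_n(v)=\sum_{A\ni n}\pi_A(v)$. Virtual valuation: $w_n(x_n^i)=x_n^i-(x_n^{i+1}-x_n^i)\frac{\sum_{j>i}p_n^j}{p_n^i}$ for $i<K_n$, $w_n(x_n^{K_n})=x_n^{K_n}$. Monotone virtual valuation: with $(g_n^0,h_n^0)=(0,-x_n^1)$, $(g_n^i,h_n^i)=(\sum_{j\le i}p_n^j,-x_n^{i+1}\sum_{j>i}p_n^j)$ for $1\le i\le K_n-1$, $(g_n^{K_n},h_n^{K_n})=(1,0)$, let $\overline{h}_n^i$ be the value at $g_n^i$ of the lower convex hull of these points and $\overline{w}_n(x_n^i)=(\overline{h}_n^i-\overline{h}_n^{i-1})/(g_n^i-g_n^{i-1})$. An allocation rule is optimal (allocation rule of a revenue-maximizing Bayesian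 incentive compatible, individually rational mechanism) if for every $v$, $\pi(v)$ is supported on $\arg\max_{A\in\mathcal{A}}\sum_{n\in A}\overline{w}_n(v_n)$, with consistent tie-breaking: if $v_n<v_n'$ and $\overline{w}_n(v_n)=\overline{w}_n(v_n')$ then $Q_n(v_n,v_{-n})\le Q_n(v_n',v_{-n})$. $\tilde\pi^o$ is an optimal allocation rule maximizing realized welfare $\mathbb{E}[\sum_nQ_n(X)X_n]$ among optimal rules. $\mathrm{MSW}=\mathbb{E}[\max_nX_n]$, $\mathrm{ELR}(\pi)=(\mathrm{MSW}-\mathbb{E}[\sum_nQ_n(X)X_n])/\mathrm{MSW}$. $\mathcal{D}_{r,K}$: all such type distributions with $K_n\le K$, $x_n^1>0$, $p_n^i>0$, $(\max_nx_n^{K_n})/(\min_nx_n^1)\le r$; $\eta(r,K;\mathcal{A})=\sup_{\mathcal{D}_{r,K}}\mathrm{ELR}(\tilde\pi^o)$. *)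

theory Defs
  imports "HOL-Analysis.Analysis"
begin

text \<open>A type distribution is given by Kn (number of types of buyer n),
  x n i (the i-th type value, i = 1..Kn n) and p n i (its probability).
  Bids are represented by type indices: a bid profile v maps buyer n to an index in 1..Kn n.\<close>

definition valid_dist ::
  "nat \<Rightarrow> real \<Rightarrow> nat \<Rightarrow> (nat \<Rightarrow> nat) \<Rightarrow> (nat \<Rightarrow> nat \<Rightarrow> real) \<Rightarrow> (nat \<Rightarrow> nat \<Rightarrow> real) \<Rightarrow> bool" where
  "valid_dist N r K Kn x p \<longleftrightarrow>
     (\<forall>n\<in>{1..N}. 1 \<le> Kn n \<and> Kn n \<le> K \<and> 0 < x n 1 \<and>
        (\<forall>i\<in>{1..<Kn n}. x n i < x n (Suc i)) \<and>
        (\<forall>i\<in>{1..Kn n}. 0 < p n i) \<and> (\<Sum>i=1..Kn n. p n i) = 1) \<and>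
     (MAX n\<in>{1..N}. x n (Kn n)) / (MIN n\<in>{1..N}. x n 1) \<le> r"

definition profiles :: "nat \<Rightarrow> (nat \<Rightarrow> nat) \<Rightarrow> (nat \<Rightarrow> nat) set" where
  "profiles N Kn = PiE {1..N} (\<lambda>n. {1..Kn n})"

definition prof_prob :: "nat \<Rightarrow> (nat \<Rightarrow> nat \<Rightarrow> real) \<Rightarrow> (nat \<Rightarrow> nat) \<Rightarrow> real" where
  "prof_prob N p v = (\<Prod>n\<in>{1..N}. p n (v n))"

text \<open>Points (g^i, h^i), i = 0..Kn n, whose lower convex hull defines the monotone virtual valuation.\<close>

definition gpt :: "(nat \<Rightarrow> nat) \<Rightarrow> (nat \<Rightarrow> nat \<Rightarrow> real) \<Rightarrow> nat \<Rightarrow> nat \<Rightarrow> real" where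
  "gpt Kn p n i = (if i = Kn n then 1 else (\<Sum>j=1..i. p n j))"

definition hpt :: "(nat \<Rightarrow> nat) \<Rightarrow> (nat \<Rightarrow> nat \<Rightarrow> real) \<Rightarrow> (nat \<Rightarrow> nat \<Rightarrow> real) \<Rightarrow> nat \<Rightarrow> nat \<Rightarrow> real" where
  "hpt Kn x p n i =
     (if i = 0 then - x n 1
      else if i < Kn n then - x n (Suc i) * (\<Sum>j\<in>{i<..Kn n}. p n j)
      else 0)"

definition hbar :: "(nat \<Rightarrow> nat) \<Rightarrow> (nat \<Rightarrow> nat \<Rightarrow> real) \<Rightarrow> (nat \<Rightarrow> nat \<Rightarrow> real) \<Rightarrow> nat \<Rightarrow> nat \<Rightarrow> real" where
  "hbar Kn x p n i =
     Sup {f (gpt Kn p n i) | f. convex_on {0..1} f \<and>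
                                 (\<forall>j\<in>{0..Kn n}. f (gpt Kn p n j) \<le> hpt Kn x p n j)}"

definition wbar :: "(nat \<Rightarrow> nat) \<Rightarrow> (nat \<Rightarrow> nat \<Rightarrow> real) \<Rightarrow> (nat \<Rightarrow> nat \<Rightarrow> real) \<Rightarrow> nat \<Rightarrow> nat \<Rightarrow> real" where
  "wbar Kn x p n i =
     (hbar Kn x p n i - hbar Kn x p n (i - 1)) / (gpt Kn p n i - gpt Kn p n (i - 1))"

definition alloc_rule ::
  "nat \<Rightarrow> (nat \<Rightarrow> nat) \<Rightarrow> nat set set \<Rightarrow> ((nat \<Rightarrow> nat) \<Rightarrow> nat set \<Rightarrow> real) \<Rightarrow> bool" where
  "alloc_rule N Kn \<A> \<pi> \<longleftrightarrow>
     (\<forall>v\<in>profiles N Kn. (\<forall>A. 0 \<le> \<pi> v A) \<and> (\<forall>A. A \<notin> \<A> \<longrightarrow> \<pi> v A = 0) \<and>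
                         (\<Sum>A\<in>\<A>. \<pi> v A) = 1)"

definition Qn :: "nat set set \<Rightarrow> ((nat \<Rightarrow> nat) \<Rightarrow> nat set \<Rightarrow> real) \<Rightarrow> nat \<Rightarrow> (nat \<Rightarrow> nat) \<Rightarrow> real" where
  "Qn \<A> \<pi> n v = (\<Sum>A\<in>{A\<in>\<A>. n \<in> A}. \<pi> v A)"

definition optimal_rule ::
  "nat \<Rightarrow> (nat \<Rightarrow> nat) \<Rightarrow> (nat \<Rightarrow> nat \<Rightarrow> real) \<Rightarrow> (nat \<Rightarrow> nat \<Rightarrow> real) \<Rightarrow> nat set set
     \<Rightarrow> ((nat \<Rightarrow> nat) \<Rightarrow> nat set \<Rightarrow> real) \<Rightarrow> bool" where
  "optimal_rule N Kn x p \<A> \<pi> \<longleftrightarrow>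
     alloc_rule N Kn \<A> \<pi> \<and>
     (\<forall>v\<in>profiles N Kn.
        (\<forall>A\<in>\<A>. 0 < \<pi> v A \<longrightarrow>
            (\<forall>B\<in>\<A>. (\<Sum>n\<in>B. wbar Kn x p n (v n)) \<le> (\<Sum>n\<in>A. wbar Kn x p n (v n)))) \<and>
        (\<forall>n\<in>{1..N}. \<forall>i\<in>{1..Kn n}.
            v n < i \<and> wbar Kn x p n (v n) = wbar Kn x p n i \<longrightarrow>
            Qn \<A> \<pi> n v \<le> Qn \<A> \<pi> n (v(n := i))))"

definition welfare ::
  "nat \<Rightarrow> (nat \<Rightarrow> nat) \<Rightarrow> (nat \<Rightarrow> nat \<Rightarrow> real) \<Rightarrow> (nat \<Rightarrow> nat \<Rightarrow> real) \<Rightarrow> nat set set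
     \<Rightarrow> ((nat \<Rightarrow> nat) \<Rightarrow> nat set \<Rightarrow> real) \<Rightarrow> real" where
  "welfare N Kn x p \<A> \<pi> =
     (\<Sum>v\<in>profiles N Kn. prof_prob N p v * (\<Sum>n\<in>{1..N}. Qn \<A> \<pi> n v * x n (v n)))"

definition MSW :: "nat \<Rightarrow> (nat \<Rightarrow> nat) \<Rightarrow> (nat \<Rightarrow> nat \<Rightarrow> real) \<Rightarrow> (nat \<Rightarrow> nat \<Rightarrow> real) \<Rightarrow> real" where
  "MSW N Kn x p = (\<Sum>v\<in>profiles N Kn. prof_prob N p v * (MAX n\<in>{1..N}. x n (v n)))"

definition ELR ::
  "nat \<Rightarrow> (nat \<Rightarrow> nat) \<Rightarrow> (nat \<Rightarrow> nat \<Rightarrow> real) \<Rightarrow> (nat \<Rightarrow> nat \<Rightarrow> real) \<Rightarrow> nat set set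
     \<Rightarrow> ((nat \<Rightarrow> nat) \<Rightarrow> nat set \<Rightarrow> real) \<Rightarrow> real" where
  "ELR N Kn x p \<A> \<pi> = (MSW N Kn x p - welfare N Kn x p \<A> \<pi>) / MSW N Kn x p"

definition eta :: "nat \<Rightarrow> real \<Rightarrow> nat \<Rightarrow> nat set set \<Rightarrow> real" where
  "eta N r K \<A> = Sup {ELR N Kn x p \<A> \<pi> | Kn x p \<pi>.
      valid_dist N r K Kn x p \<and> optimal_rule N Kn x p \<A> \<pi> \<and>
      (\<forall>\<pi>'. optimal_rule N Kn x p \<A> \<pi>' \<longrightarrow> welfare N Kn x p \<A> \<pi>' \<le> welfare N Kn x p \<A> \<pi>)}"

definition single_item :: "nat \<Rightarrow> nat set set" where
  "single_item N = insert {} ((\<lambda>n. {n}) ` {1..N})"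

definition gamma_star :: "real \<Rightarrow> nat \<Rightarrow> real" where
  "gamma_star r K = real (K - 1) * (1 - r powr (- 1 / real (K - 1)))"

end

theory Submission
  imports Defs
begin

text \<open>Buyer 1 has \<open>K\<close> types on the geometric grid \<open>1 = x\<^sub>1 < \<dots> < x\<^sub>K = r\<close> with tail
  probabilities \<open>P(X\<^sub>1 \<ge> x\<^sub>i) = (1 + a) / (x\<^sub>i + a)\<close>; every other buyer has the single type 1.
  For these tails the points \<open>(g\<^sup>i, h\<^sup>i)\<close> of buyer 1 lie on the line of slope \<open>-a\<close>, except the last
  one, so the ironed virtual value is \<open>-a\<close> on all low types and \<open>r\<close> on the top type.
  Choosing \<open>a = 0\<close> (equal revenue) when \<open>N \<ge> 2\<close> and \<open>a = 1\<close> when \<open>N = 1\<close>, the optimal mechanism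
  serves buyer 1 only at the top type, which has probability \<open>(1 + a) / (r + a)\<close>, and otherwise
  sells to a value-1 buyer if there is one; its welfare is at most \<open>2 - 1/r\<close>. Since consecutive
  grid points have ratio \<open>q = r\<^bsup>-1/(K-1)\<^esup>\<close> and \<open>P(X\<^sub>1 \<ge> x) \<ge> 1/x\<close>, the expected maximal value
  is at least \<open>1 + (K - 1)(1 - q) = 1 + \<gamma>\<^sup>*\<close>.\<close>

lemma convex_on_max:
  fixes f g :: "'a::real_vector \<Rightarrow> real"
  assumes "convex_on S f" "convex_on S g"
  shows "convex_on S (\<lambda>x. max (f x) (g x))"
  unfolding convex_on_def
proof (intro conjI ballI allI impI)
  show "convex S" using assms(1) by (rule convex_on_imp_convex)
  fix x y :: 'a and u v :: real assume xy: "x \<in> S" "y \<in> S" and uv: "0 \<le> u" "0 \<le> v" "u + v = 1"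
  have "u * f x + v * f y \<le> u * max (f x) (g x) + v * max (f y) (g y)"
       "u * g x + v * g y \<le> u * max (f x) (g x) + v * max (f y) (g y)"
    using uv by (auto intro!: add_mono mult_left_mono)
  moreover have "f (u *\<^sub>R x + v *\<^sub>R y) \<le> u * f x + v * f y"
                "g (u *\<^sub>R x + v *\<^sub>R y) \<le> u * g x + v * g y"
    using assms xy uv unfolding convex_on_def by auto
  ultimately show "max (f (u *\<^sub>R x + v *\<^sub>R y)) (g (u *\<^sub>R x + v *\<^sub>R y))
      \<le> u * max (f x) (g x) + v * max (f y) (g y)"
    by linarith
qed

lemma convex_on_affine:
  fixes c d :: real
  assumes "convex S"
  shows "convex_on S (\<lambda>t. c + d * t)"
  using assms unfolding convex_on_def
  by (auto simp: algebra_simps simp flip: distrib_right)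

lemma hbar_eq_hpt_if_touching_minorant:
  assumes "i \<in> {0..Kn n}" "convex_on {0..1} f"
    and "\<forall>j\<in>{0..Kn n}. f (gpt Kn p n j) \<le> hpt Kn x p n j"
    and "f (gpt Kn p n i) = hpt Kn x p n i"
  shows "hbar Kn x p n i = hpt Kn x p n i"
  unfolding hbar_def
proof (rule cSup_eq_maximum)
  show "hpt Kn x p n i \<in> {f (gpt Kn p n i) |f. convex_on {0..1} f \<and>
           (\<forall>j\<in>{0..Kn n}. f (gpt Kn p n j) \<le> hpt Kn x p n j)}"
    using assms(2-4) by (auto intro!: exI[of _ f])
qed (use assms(1) in auto)

definition type_grid :: "real \<Rightarrow> nat \<Rightarrow> nat \<Rightarrow> real" where
  "type_grid r K i = r powr (real (i - 1) / real (K - 1))"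

definition tail_prob :: "real \<Rightarrow> nat \<Rightarrow> real \<Rightarrow> nat \<Rightarrow> real" where
  "tail_prob r K a i = (if i \<le> K then (1 + a) / (type_grid r K i + a) else 0)"

definition inst_Kn :: "nat \<Rightarrow> nat \<Rightarrow> nat" where
  "inst_Kn K n = (if n = 1 then K else 1)"

definition inst_x :: "real \<Rightarrow> nat \<Rightarrow> nat \<Rightarrow> nat \<Rightarrow> real" where
  "inst_x r K n i = (if n = 1 then type_grid r K i else 1)"

definition inst_p :: "real \<Rightarrow> nat \<Rightarrow> real \<Rightarrow> nat \<Rightarrow> nat \<Rightarrow> real" where
  "inst_p r K a n i = (if n = 1 then tail_prob r K a i - tail_prob r K a (Suc i) else 1)"

locale grid_distribution =
  fixes r :: real and K :: nat and a :: real
  assumes r_gt_1: "r > 1" and K_ge_2: "K \<ge> 2" and a_nonneg: "a \<ge> 0"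
begin

abbreviation x :: "nat \<Rightarrow> real" where "x \<equiv> type_grid r K"
abbreviation T :: "nat \<Rightarrow> real" where "T \<equiv> tail_prob r K a"
abbreviation Kn :: "nat \<Rightarrow> nat" where "Kn \<equiv> inst_Kn K"
abbreviation X :: "nat \<Rightarrow> nat \<Rightarrow> real" where "X \<equiv> inst_x r K"
abbreviation P :: "nat \<Rightarrow> nat \<Rightarrow> real" where "P \<equiv> inst_p r K a"

lemma grid_1: "x 1 = 1"
  using r_gt_1 by (simp add: type_grid_def)

lemma grid_K: "x K = r"
  using r_gt_1 K_ge_2 by (simp add: type_grid_def)

lemma grid_strict_mono: "1 \<le> i \<Longrightarrow> i < j \<Longrightarrow> x i < x j"
  unfolding type_grid_def using K_ge_2 r_gt_1
  by (intro powr_less_mono divide_strict_right_mono) (auto simp: of_nat_diff)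

lemma grid_ge_1: "1 \<le> x i"
  unfolding type_grid_def using r_gt_1 by (intro ge_one_powr_ge_zero) auto

lemma grid_le_r:
  assumes "i \<le> K"
  shows "x i \<le> r"
proof -
  have "real (i - 1) / real (K - 1) \<le> 1"
    using assms K_ge_2 by (simp add: divide_le_eq_1)
  then have "x i \<le> r powr 1"
    unfolding type_grid_def using r_gt_1 by (intro powr_mono) auto
  then show ?thesis using r_gt_1 by simp
qed

lemma grid_ratio:
  assumes "1 \<le> i"
  shows "x i / x (Suc i) = r powr (- 1 / real (K - 1))"
proof -
  have "x i / x (Suc i) = r powr (real (i - 1) / real (K - 1) - real (Suc i - 1) / real (K - 1))"
    unfolding type_grid_def by (simp add: powr_diff)
  also have "real (i - 1) / real (K - 1) - real (Suc i - 1) / real (K - 1) = - 1 / real (K - 1)"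
    using assms by (simp add: of_nat_diff diff_divide_distrib[symmetric])
  finally show ?thesis .
qed

lemma tail_pos: "i \<le> K \<Longrightarrow> 0 < T i"
  using grid_ge_1[of i] a_nonneg by (simp add: tail_prob_def)

lemma tail_1: "T (Suc 0) = 1"
  using K_ge_2 grid_1 a_nonneg by (simp add: tail_prob_def)

lemma tail_K: "T K = (1 + a) / (r + a)"
  using grid_K by (simp add: tail_prob_def)

lemma tail_Suc_K: "T (Suc K) = 0"
  by (simp add: tail_prob_def)

lemma tail_strict_decreasing: "1 \<le> i \<Longrightarrow> i < K \<Longrightarrow> T (Suc i) < T i"
  using grid_strict_mono[of i "Suc i"] grid_ge_1[of i] a_nonneg
  by (simp add: tail_prob_def) (intro divide_strict_left_mono mult_pos_pos; linarith?)

lemma inverse_grid_le_tail: "i \<le> K \<Longrightarrow> 1 / x i \<le> T i"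
  using grid_ge_1[of i] a_nonneg mult_left_mono[OF grid_ge_1[of i] a_nonneg]
  by (simp add: tail_prob_def field_simps)

lemma grid_mult_tail: "i \<le> K \<Longrightarrow> x i * T i = (1 + a) - a * T i"
  using grid_ge_1[of i] a_nonneg by (simp add: tail_prob_def field_simps)

lemma sum_inst_p_atLeast1:
  assumes "i \<le> K"
  shows "(\<Sum>j=1..i. P 1 j) = 1 - T (Suc i)"
proof -
  have "(\<Sum>j=1..i. P 1 j) = - (\<Sum>j=1..i. T (Suc j) - T j)"
    by (simp add: inst_p_def sum_negf[symmetric])
  also have "\<dots> = 1 - T (Suc i)"
    by (subst sum_Suc_diff) (auto simp: tail_1)
  finally show ?thesis .
qed

lemma sum_inst_p_greaterThan:
  assumes "i \<le> K"
  shows "(\<Sum>j\<in>{i<..K}. P 1 j) = T (Suc i)"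
proof -
  have "{i<..K} = {Suc i..K}" by auto
  then have "(\<Sum>j\<in>{i<..K}. P 1 j) = - (\<Sum>j=Suc i..K. T (Suc j) - T j)"
    by (simp add: inst_p_def sum_negf[symmetric])
  also have "\<dots> = T (Suc i)"
    using assms by (subst sum_Suc_diff) (auto simp: tail_Suc_K)
  finally show ?thesis .
qed

lemma inst_p_pos: "i \<in> {1..K} \<Longrightarrow> 0 < P 1 i"
  using tail_pos[of K] tail_Suc_K tail_strict_decreasing[of i]
  by (cases "i = K") (auto simp: inst_p_def)

lemma gpt_buyer1: "j < K \<Longrightarrow> gpt Kn P 1 j = 1 - T (Suc j)"
  using sum_inst_p_atLeast1[of j] by (simp add: gpt_def inst_Kn_def)

lemma gpt_buyer1_K: "gpt Kn P 1 K = 1"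
  by (simp add: gpt_def inst_Kn_def)

lemma hpt_buyer1: "j < K \<Longrightarrow> hpt Kn X P 1 j = -(1 + a) + a * T (Suc j)"
  using sum_inst_p_greaterThan[of j] grid_mult_tail[of "Suc j"] tail_1 grid_1
  by (cases "j = 0") (auto simp: hpt_def inst_Kn_def inst_x_def)

lemma hpt_buyer1_K: "hpt Kn X P 1 K = 0"
  using K_ge_2 by (simp add: hpt_def inst_Kn_def)

text \<open>All points of buyer 1 lie on the line \<open>t \<mapsto> -1 - a t\<close> except the last one \<open>(1, 0)\<close>,
  and \<open>T (j+1) \<ge> (1 + a) / (r + a)\<close> keeps them above the line \<open>t \<mapsto> r (t - 1)\<close> through it.\<close>

lemma hpt_buyer1_eq_max_affine:
  assumes "j \<le> K"
  shows "max (-1 - a * gpt Kn P 1 j) (r * (gpt Kn P 1 j - 1)) = hpt Kn X P 1 j"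
proof (cases "j = K")
  case True
  then show ?thesis using gpt_buyer1_K hpt_buyer1_K a_nonneg by simp
next
  case False
  with assms have j: "j < K" by simp
  have "1 + a \<le> (r + a) * T (Suc j)"
    using j grid_le_r[of "Suc j"] grid_ge_1[of "Suc j"] a_nonneg
      mult_left_mono[OF grid_le_r[of "Suc j"] a_nonneg]
    by (simp add: tail_prob_def field_simps)
  then have "r * ((1 - T (Suc j)) - 1) \<le> -1 - a * (1 - T (Suc j))"
    by (simp add: algebra_simps)
  then show ?thesis
    unfolding gpt_buyer1[OF j] hpt_buyer1[OF j] by (simp add: max_def algebra_simps)
qed

lemma hbar_buyer1: "j \<le> K \<Longrightarrow> hbar Kn X P 1 j = hpt Kn X P 1 j"
proof (rule hbar_eq_hpt_if_touching_minorant[where f = "\<lambda>t. max (-1 - a * t) (r * (t - 1))"])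
  show "convex_on {0..1} (\<lambda>t. max (-1 - a * t) (r * (t - 1)))"
    using convex_on_max[OF convex_on_affine[of "{0..1}" "-1" "-a"] convex_on_affine[of "{0..1}" "-r" r]]
    by (simp add: algebra_simps)
qed (use hpt_buyer1_eq_max_affine in \<open>auto simp: inst_Kn_def\<close>)

lemma wbar_buyer1_low:
  assumes "1 \<le> i" "i < K"
  shows "wbar Kn X P 1 i = - a"
proof -
  have i: "Suc (i - 1) = i" using assms by simp
  have hull_values: "hbar Kn X P 1 i = -(1 + a) + a * T (Suc i)"
       "hbar Kn X P 1 (i - 1) = -(1 + a) + a * T i"
       "gpt Kn P 1 i = 1 - T (Suc i)" "gpt Kn P 1 (i - 1) = 1 - T i"
    using hbar_buyer1[of i] hpt_buyer1[of i] hbar_buyer1[of "i - 1"] hpt_buyer1[of "i - 1"]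
      gpt_buyer1[of i] gpt_buyer1[of "i - 1"] assms i
    by simp_all
  have "T (Suc i) < T i" using tail_strict_decreasing assms by simp
  then show ?thesis unfolding wbar_def hull_values by (simp add: field_simps)
qed

lemma wbar_buyer1_top: "wbar Kn X P 1 K = r"
proof -
  have K: "Suc (K - 1) = K" using K_ge_2 by simp
  have hull_values: "hbar Kn X P 1 K = 0" "hbar Kn X P 1 (K - 1) = -(1 + a) + a * T K"
       "gpt Kn P 1 K = 1" "gpt Kn P 1 (K - 1) = 1 - T K"
    using hbar_buyer1[of K] hpt_buyer1_K hbar_buyer1[of "K - 1"] hpt_buyer1[of "K - 1"]
      gpt_buyer1_K gpt_buyer1[of "K - 1"] K_ge_2 K
    by simp_all
  have "(1 + a) - a * T K = r * T K"
    using r_gt_1 a_nonneg unfolding tail_K by (simp add: field_simps)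
  then show ?thesis
    using tail_pos[of K] unfolding wbar_def hull_values by (simp add: field_simps)
qed

lemma wbar_other_buyer:
  assumes "n \<noteq> 1"
  shows "wbar Kn X P n 1 = 1"
proof -
  have g: "gpt Kn P n 0 = 0" "gpt Kn P n 1 = 1"
    using assms by (auto simp: gpt_def inst_Kn_def)
  have h: "hpt Kn X P n 0 = -1" "hpt Kn X P n 1 = 0"
    using assms by (auto simp: hpt_def inst_Kn_def inst_x_def)
  have "hbar Kn X P n j = hpt Kn X P n j" if "j \<le> 1" for j
    using that assms g h convex_on_affine[of "{0..1}" "-1" 1]
    by (intro hbar_eq_hpt_if_touching_minorant[where f = "\<lambda>t. -1 + t"])
       (auto simp: inst_Kn_def le_Suc_eq)
  then show ?thesis unfolding wbar_def using g h by simp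
qed

text \<open>Each grid step adds \<open>(x\<^sub>m\<^sub>+\<^sub>1 - x\<^sub>m) T\<^sub>m\<^sub>+\<^sub>1 \<ge> 1 - x\<^sub>m / x\<^sub>m\<^sub>+\<^sub>1 = 1 - q\<close>.\<close>

lemma partial_expectation_ge:
  assumes "1 \<le> m" "m \<le> K"
  shows "1 + real (m - 1) * (1 - r powr (- 1 / real (K - 1)))
           \<le> (\<Sum>i=1..m. P 1 i * x i) + x m * T (Suc m)"
  using assms
proof (induction m rule: nat_induct_at_least)
  case base
  then show ?case using grid_1 tail_1 by (simp add: inst_p_def algebra_simps)
next
  case (Suc m)
  let ?q = "r powr (- 1 / real (K - 1))"
  have "(x (Suc m) - x m) * (1 / x (Suc m)) \<le> (x (Suc m) - x m) * T (Suc m)"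
    using inverse_grid_le_tail[of "Suc m"] grid_strict_mono[of m "Suc m"] Suc.prems Suc.hyps
    by (intro mult_left_mono) auto
  moreover have "(x (Suc m) - x m) * (1 / x (Suc m)) = 1 - ?q"
    using grid_ratio[of m] grid_ge_1[of "Suc m"] Suc.hyps by (simp add: field_simps)
  ultimately have step: "1 - ?q \<le> (x (Suc m) - x m) * T (Suc m)"
    by simp
  have sum: "(\<Sum>i=1..Suc m. P 1 i * x i)
      = (\<Sum>i=1..m. P 1 i * x i) + (T (Suc m) - T (Suc (Suc m))) * x (Suc m)"
    using Suc.hyps by (simp add: inst_p_def)
  have count: "real (Suc m - 1) = real (m - 1) + 1"
    using Suc.hyps by simp
  show ?case
    unfolding sum count using Suc.IH Suc.prems step by (simp add: algebra_simps)
qed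

lemma expectation_ge_1_plus_gamma_star:
  "1 + gamma_star r K \<le> (\<Sum>i=1..K. P 1 i * x i)"
  using partial_expectation_ge[of K] K_ge_2 tail_Suc_K by (simp add: gamma_star_def)

end

lemma profile_component: "v \<in> profiles N Kn \<Longrightarrow> n \<in> {1..N} \<Longrightarrow> v n \<in> {1..Kn n}"
  unfolding profiles_def by (rule PiE_mem)

lemma valid_dist_type_pos:
  assumes "valid_dist N r K Kn x p" "n \<in> {1..N}" "i \<in> {1..Kn n}"
  shows "0 < x n i"
proof -
  have "0 < x n 1" "\<forall>i\<in>{1..<Kn n}. x n i < x n (Suc i)"
    using assms(1,2) unfolding valid_dist_def by auto
  then have "1 \<le> i \<longrightarrow> i \<le> Kn n \<longrightarrow> 0 < x n i" for i
    by (induction i) (auto simp: le_Suc_eq intro: less_trans)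
  then show ?thesis using assms(3) by auto
qed

lemma prof_prob_pos:
  assumes "valid_dist N r K Kn x p" "v \<in> profiles N Kn"
  shows "0 < prof_prob N p v"
  unfolding prof_prob_def using assms profile_component[OF assms(2)]
  by (intro prod_pos) (auto simp: valid_dist_def)

lemma MSW_pos:
  assumes V: "valid_dist N r K Kn x p" and N: "N \<ge> 1"
  shows "0 < MSW N Kn x p"
  unfolding MSW_def
proof (rule sum_pos)
  show "finite (profiles N Kn)" unfolding profiles_def by (intro finite_PiE) auto
  show "profiles N Kn \<noteq> {}"
    using V unfolding profiles_def PiE_eq_empty_iff valid_dist_def by auto
  fix v assume v: "v \<in> profiles N Kn"
  have "x 1 (v 1) \<le> (MAX n\<in>{1..N}. x n (v n))" using N by (intro Max_ge) auto
  moreover have "0 < x 1 (v 1)"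
    using valid_dist_type_pos[OF V _ profile_component[OF v]] N by auto
  ultimately show "0 < prof_prob N p v * (MAX n\<in>{1..N}. x n (v n))"
    using prof_prob_pos[OF V v] by simp
qed

lemma welfare_nonneg:
  assumes V: "valid_dist N r K Kn x p" and A: "alloc_rule N Kn \<A> \<pi>"
  shows "0 \<le> welfare N Kn x p \<A> \<pi>"
  unfolding welfare_def
proof (intro sum_nonneg mult_nonneg_nonneg)
  fix v assume v: "v \<in> profiles N Kn"
  show "0 \<le> prof_prob N p v" using prof_prob_pos[OF V v] by simp
  fix n assume n: "n \<in> {1..N}"
  show "0 \<le> x n (v n)" using valid_dist_type_pos[OF V n profile_component[OF v n]] by simp
  show "0 \<le> Qn \<A> \<pi> n v"
    unfolding Qn_def using A v by (intro sum_nonneg) (auto simp: alloc_rule_def)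
qed

lemma ELR_le_1:
  assumes "valid_dist N r K Kn x p" "alloc_rule N Kn \<A> \<pi>" "N \<ge> 1"
  shows "ELR N Kn x p \<A> \<pi> \<le> 1"
  using MSW_pos[OF assms(1,3)] welfare_nonneg[OF assms(1,2)]
  unfolding ELR_def by (simp add: pos_divide_le_eq)

lemma ELR_le_eta:
  assumes "valid_dist N r K Kn x p" and "optimal_rule N Kn x p \<A> \<pi>"
    and "\<forall>\<pi>'. optimal_rule N Kn x p \<A> \<pi>' \<longrightarrow> welfare N Kn x p \<A> \<pi>' \<le> welfare N Kn x p \<A> \<pi>"
    and "N \<ge> 1"
  shows "ELR N Kn x p \<A> \<pi> \<le> eta N r K \<A>"
  unfolding eta_def
proof (rule cSup_upper)
  show "ELR N Kn x p \<A> \<pi> \<in> {ELR N Kn x p \<A> \<pi> | Kn x p \<pi>.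
      valid_dist N r K Kn x p \<and> optimal_rule N Kn x p \<A> \<pi> \<and>
      (\<forall>\<pi>'. optimal_rule N Kn x p \<A> \<pi>' \<longrightarrow> welfare N Kn x p \<A> \<pi>' \<le> welfare N Kn x p \<A> \<pi>)}"
    using assms(1-3) by blast
  show "bdd_above {ELR N Kn x p \<A> \<pi> | Kn x p \<pi>.
      valid_dist N r K Kn x p \<and> optimal_rule N Kn x p \<A> \<pi> \<and>
      (\<forall>\<pi>'. optimal_rule N Kn x p \<A> \<pi>' \<longrightarrow> welfare N Kn x p \<A> \<pi>' \<le> welfare N Kn x p \<A> \<pi>)}"
    using ELR_le_1 assms(4) by (intro bdd_aboveI[of _ 1]) (auto simp: optimal_rule_def)
qed

lemma single_item_iff: "A \<in> single_item N \<longleftrightarrow> A = {} \<or> (\<exists>m\<in>{1..N}. A = {m})"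
  unfolding single_item_def by auto

lemma sum_single_item: "(\<Sum>A\<in>single_item N. f A) = f {} + (\<Sum>n=1..N. f {n})"
proof -
  have "{} \<notin> (\<lambda>n. {n}) ` {1..N}" by auto
  then have "(\<Sum>A\<in>single_item N. f A) = f {} + (\<Sum>A\<in>(\<lambda>n. {n}) ` {1..N}. f A)"
    unfolding single_item_def by simp
  also have "(\<Sum>A\<in>(\<lambda>n. {n}) ` {1..N}. f A) = (\<Sum>n=1..N. f {n})"
    by (subst sum.reindex) (auto simp: inj_on_def)
  finally show ?thesis .
qed

lemma Qn_single_item: "n \<in> {1..N} \<Longrightarrow> Qn (single_item N) \<pi> n v = \<pi> v {n}"
proof -
  assume "n \<in> {1..N}"
  then have "{A \<in> single_item N. n \<in> A} = {{n}}" unfolding single_item_def by auto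
  then show ?thesis unfolding Qn_def by simp
qed

lemma single_item_sales_le_1:
  assumes "alloc_rule N Kn (single_item N) \<pi>" "v \<in> profiles N Kn"
  shows "(\<Sum>n=1..N. \<pi> v {n}) \<le> 1"
proof -
  have "0 \<le> \<pi> v {}" "(\<Sum>A\<in>single_item N. \<pi> v A) = 1"
    using assms unfolding alloc_rule_def by auto
  then show ?thesis by (simp add: sum_single_item)
qed

lemma weighted_sum_le:
  fixes w y :: "'a \<Rightarrow> real"
  assumes "\<forall>n\<in>I. 0 \<le> w n" "sum w I \<le> 1" "0 \<le> c" "\<forall>n\<in>I. w n \<noteq> 0 \<longrightarrow> y n \<le> c"
  shows "(\<Sum>n\<in>I. w n * y n) \<le> c"
proof -
  have "(\<Sum>n\<in>I. w n * y n) \<le> (\<Sum>n\<in>I. c * w n)"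
    using assms(1,4) by (intro sum_mono) (metis mult.commute mult_eq_0_iff mult_right_mono order.refl)
  also have "\<dots> \<le> c"
    using assms(2,3) mult_left_mono[OF assms(2,3)] by (simp add: sum_distrib_left[symmetric])
  finally show ?thesis .
qed

lemma loss_ratio_ge:
  fixes g M W r :: real
  assumes "0 \<le> g" "1 + g \<le> M" "0 \<le> W" "W \<le> 2 - 1 / r" "r > 1"
  shows "(g - (1 - 1 / r)) / (1 + g) \<le> (M - W) / M"
proof -
  have M: "M > 0" using assms by simp
  have pos: "0 < r + g * r" using assms by (simp add: add_pos_nonneg)
  have "W / M \<le> (2 - 1 / r) / M" using M assms by (simp add: divide_right_mono)
  also have "\<dots> \<le> (2 - 1 / r) / (1 + g)"
    using assms by (intro divide_left_mono) (auto simp: field_simps add_pos_nonneg)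
  finally have "W / M \<le> (2 - 1 / r) / (1 + g)" .
  moreover have "(g - (1 - 1 / r)) / (1 + g) = 1 - (2 - 1 / r) / (1 + g)"
    using assms pos by (simp add: field_simps)
  moreover have "(M - W) / M = 1 - W / M" using M by (simp add: field_simps)
  ultimately show ?thesis by simp
qed

lemma gamma_star_nonneg:
  assumes "r \<ge> 1"
  shows "0 \<le> gamma_star r K"
proof -
  have "r powr (- 1 / real (K - 1)) \<le> r powr 0"
    using assms by (intro powr_mono) auto
  then show ?thesis unfolding gamma_star_def using assms by simp
qed

definition inst_winner :: "nat \<Rightarrow> nat \<Rightarrow> (nat \<Rightarrow> nat) \<Rightarrow> nat set" where
  "inst_winner N K v = (if v 1 = K then {1} else if 2 \<le> N then {2} else {})"

definition inst_rule :: "nat \<Rightarrow> nat \<Rightarrow> (nat \<Rightarrow> nat) \<Rightarrow> nat set \<Rightarrow> real" where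
  "inst_rule N K v A = (if A = inst_winner N K v then 1 else 0)"

definition inst_profile :: "nat \<Rightarrow> nat \<Rightarrow> nat \<Rightarrow> nat" where
  "inst_profile N i = (\<lambda>n. if n \<in> {1..N} then (if n = 1 then i else 1) else undefined)"

text \<open>With \<open>N \<ge> 2\<close> the low types of buyer 1 have ironed virtual value \<open>-a = 0 < 1\<close>, so they lose
  to buyer 2; with \<open>N = 1\<close> the shift \<open>a = 1\<close> makes it negative, so that even the welfare-maximizing
  optimal rule keeps the item.\<close>

locale lower_bound_instance = grid_distribution +
  fixes N :: nat
  assumes N_ge_1: "N \<ge> 1" and a_choice: "a = (if N = 1 then 1 else 0)"
begin

abbreviation \<A> :: "nat set set" where "\<A> \<equiv> single_item N"
abbreviation \<pi> :: "(nat \<Rightarrow> nat) \<Rightarrow> nat set \<Rightarrow> real" where "\<pi> \<equiv> inst_rule N K"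

lemma buyers_cases: "(N = 1 \<and> a = 1) \<or> (2 \<le> N \<and> a = 0)"
  using N_ge_1 a_choice by auto

lemma inst_profileD:
  assumes "v \<in> profiles N Kn"
  shows "v 1 \<in> {1..K}" "n \<in> {1..N} \<Longrightarrow> n \<noteq> 1 \<Longrightarrow> v n = 1"
  using profile_component[OF assms, of 1] profile_component[OF assms, of n] N_ge_1
  by (auto simp: inst_Kn_def)

lemma prof_prob_inst: "prof_prob N P v = P 1 (v 1)"
proof -
  have "prof_prob N P v = (\<Prod>n\<in>{1..N}. if n = 1 then P 1 (v 1) else 1)"
    unfolding prof_prob_def by (intro prod.cong) (auto simp: inst_p_def)
  also have "\<dots> = P 1 (v 1)" using N_ge_1 by (subst prod.delta) auto
  finally show ?thesis .
qed

lemma bij_inst_profile: "bij_betw (inst_profile N) {1..K} (profiles N Kn)"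
proof (rule bij_betw_byWitness[where f' = "\<lambda>v. v 1"])
  show "\<forall>i\<in>{1..K}. inst_profile N i 1 = i" using N_ge_1 by (simp add: inst_profile_def)
  show "\<forall>v\<in>profiles N Kn. inst_profile N (v 1) = v"
  proof
    fix v assume v: "v \<in> profiles N Kn"
    have "inst_profile N (v 1) n = v n" for n
    proof (cases "n \<in> {1..N}")
      case True
      then show ?thesis using inst_profileD(2)[OF v] by (simp add: inst_profile_def)
    next
      case False
      have "v n = undefined" using v False unfolding profiles_def by (rule PiE_arb)
      moreover have "inst_profile N (v 1) n = undefined"
        using False unfolding inst_profile_def by (rule if_not_P)
      ultimately show ?thesis by simp
    qed
    then show "inst_profile N (v 1) = v" ..
  qed
  show "inst_profile N ` {1..K} \<subseteq> profiles N Kn"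
    unfolding profiles_def by (auto simp: inst_profile_def inst_Kn_def PiE_iff)
  show "(\<lambda>v. v 1) ` profiles N Kn \<subseteq> {1..K}"
    using inst_profileD(1) by auto
qed

lemma sum_profiles_inst:
  "(\<Sum>v\<in>profiles N Kn. P 1 (v 1) * f (v 1)) = (\<Sum>i=1..K. P 1 i * f i)"
proof -
  have "(\<Sum>v\<in>profiles N Kn. P 1 (v 1) * f (v 1))
      = (\<Sum>i=1..K. P 1 (inst_profile N i 1) * f (inst_profile N i 1))"
    by (rule sum.reindex_bij_betw[OF bij_inst_profile, symmetric])
  also have "\<dots> = (\<Sum>i=1..K. P 1 i * f i)"
    using N_ge_1 by (simp add: inst_profile_def)
  finally show ?thesis .
qed

lemma wbar_inst:
  assumes v: "v \<in> profiles N Kn" and n: "n \<in> {1..N}"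
  shows "wbar Kn X P n (v n) = (if n = 1 then (if v 1 = K then r else -a) else 1)"
proof (cases "n = 1")
  case True
  then show ?thesis using inst_profileD(1)[OF v] wbar_buyer1_low[of "v 1"] wbar_buyer1_top by auto
next
  case False
  then show ?thesis using inst_profileD(2)[OF v n] wbar_other_buyer[of n] by simp
qed

lemma inst_winner_mem: "inst_winner N K v \<in> \<A>"
  using N_ge_1 unfolding inst_winner_def single_item_def by auto

lemma inst_winner_maximizes_virtual_surplus:
  assumes v: "v \<in> profiles N Kn" and B: "B \<in> \<A>"
  shows "(\<Sum>n\<in>B. wbar Kn X P n (v n)) \<le> (\<Sum>n\<in>inst_winner N K v. wbar Kn X P n (v n))"
proof -
  have winner: "(\<Sum>n\<in>inst_winner N K v. wbar Kn X P n (v n))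
      = (if v 1 = K then r else of_bool (2 \<le> N))"
    using wbar_inst[OF v] wbar_buyer1_top N_ge_1 by (simp add: inst_winner_def)
  have "wbar Kn X P m (v m) \<le> (if v 1 = K then r else of_bool (2 \<le> N))" if "m \<in> {1..N}" for m
    using wbar_inst[OF v that] that buyers_cases r_gt_1 a_nonneg by auto
  then show ?thesis unfolding winner using B r_gt_1 unfolding single_item_iff by auto
qed

lemma optimal_inst_rule: "optimal_rule N Kn X P \<A> \<pi>"
  unfolding optimal_rule_def alloc_rule_def
proof (intro conjI ballI allI impI)
  fix v A assume "v \<in> profiles N Kn"
  show "0 \<le> \<pi> v A" by (simp add: inst_rule_def)
  show "A \<notin> \<A> \<Longrightarrow> \<pi> v A = 0" using inst_winner_mem by (auto simp: inst_rule_def)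
next
  fix v show "(\<Sum>A\<in>\<A>. \<pi> v A) = 1"
    unfolding inst_rule_def using inst_winner_mem by (simp add: sum.delta single_item_def)
next
  fix v A B assume v: "v \<in> profiles N Kn" and "A \<in> \<A>" "B \<in> \<A>" "0 < \<pi> v A"
  then show "(\<Sum>n\<in>B. wbar Kn X P n (v n)) \<le> (\<Sum>n\<in>A. wbar Kn X P n (v n))"
    using inst_winner_maximizes_virtual_surplus[OF v] by (auto simp: inst_rule_def split: if_splits)
next
  fix v n i assume v: "v \<in> profiles N Kn" and n: "n \<in> {1..N}" and i: "i \<in> {1..Kn n}"
    and tie: "v n < i \<and> wbar Kn X P n (v n) = wbar Kn X P n i"
  have "n = 1" using inst_profileD(2)[OF v n] i tie by (cases "n = 1") (auto simp: inst_Kn_def)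
  moreover have "v 1 \<noteq> K" using tie i \<open>n = 1\<close> by (auto simp: inst_Kn_def)
  ultimately have "Qn \<A> \<pi> n v = 0"
    using Qn_single_item[OF n] by (simp add: inst_rule_def inst_winner_def)
  moreover have "0 \<le> Qn \<A> \<pi> n (v(n := i))"
    unfolding Qn_def by (intro sum_nonneg) (simp add: inst_rule_def)
  ultimately show "Qn \<A> \<pi> n v \<le> Qn \<A> \<pi> n (v(n := i))" by simp
qed

lemma realized_value_inst:
  assumes v: "v \<in> profiles N Kn"
  shows "(\<Sum>n\<in>{1..N}. Qn \<A> \<pi> n v * X n (v n)) = (if v 1 = K then r else of_bool (2 \<le> N))"
proof -
  have "(\<Sum>n\<in>{1..N}. Qn \<A> \<pi> n v * X n (v n))
      = (\<Sum>n\<in>{1..N}. if n \<in> inst_winner N K v then X n (v n) else 0)"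
    by (intro sum.cong) (auto simp: Qn_single_item inst_rule_def inst_winner_def)
  also have "\<dots> = (\<Sum>n\<in>{1..N} \<inter> inst_winner N K v. X n (v n))"
    by (simp add: sum.inter_restrict)
  also have "\<dots> = (if v 1 = K then r else of_bool (2 \<le> N))"
    using N_ge_1 grid_K by (auto simp: inst_winner_def inst_x_def)
  finally show ?thesis .
qed

lemma welfare_inst_rule:
  "welfare N Kn X P \<A> \<pi> = (\<Sum>i=1..K. P 1 i * (if i = K then r else of_bool (2 \<le> N)))"
proof -
  have "welfare N Kn X P \<A> \<pi>
      = (\<Sum>v\<in>profiles N Kn. P 1 (v 1) * (\<lambda>i. if i = K then r else of_bool (2 \<le> N)) (v 1))"
    unfolding welfare_def using realized_value_inst prof_prob_inst by (intro sum.cong) auto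
  then show ?thesis
    using sum_profiles_inst[of "\<lambda>i. if i = K then r else of_bool (2 \<le> N)"] by simp
qed

lemma welfare_inst_rule_le: "welfare N Kn X P \<A> \<pi> \<le> 2 - 1 / r"
proof -
  have "welfare N Kn X P \<A> \<pi>
      = (\<Sum>i=1..K. of_bool (2 \<le> N) * P 1 i + (if i = K then (r - of_bool (2 \<le> N)) * P 1 i else 0))"
    unfolding welfare_inst_rule by (intro sum.cong) (auto simp: algebra_simps)
  also have "\<dots> = of_bool (2 \<le> N) + (r - of_bool (2 \<le> N)) * ((1 + a) / (r + a))"
    using K_ge_2 sum_inst_p_atLeast1[of K] tail_Suc_K tail_K
    by (simp add: sum.distrib sum_distrib_left[symmetric] inst_p_def)
  also have "\<dots> \<le> 2 - 1 / r"
    using buyers_cases r_gt_1 by (auto simp: field_simps)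
  finally show ?thesis .
qed

lemma optimal_rule_never_sells_low_buyer1:
  assumes O: "optimal_rule N Kn X P \<A> \<pi>'" and v: "v \<in> profiles N Kn" and low: "v 1 \<noteq> K"
  shows "\<pi>' v {1} = 0"
proof (rule ccontr)
  assume "\<pi>' v {1} \<noteq> 0"
  moreover have "0 \<le> \<pi>' v {1}" using O v by (simp add: optimal_rule_def alloc_rule_def)
  ultimately have "0 < \<pi>' v {1}" by simp
  moreover have "{1} \<in> \<A>" using N_ge_1 single_item_iff by auto
  ultimately have "(\<Sum>n\<in>inst_winner N K v. wbar Kn X P n (v n)) \<le> wbar Kn X P 1 (v 1)"
    using O v inst_winner_mem unfolding optimal_rule_def by fastforce
  moreover have "wbar Kn X P 1 (v 1) = -a" using wbar_inst[OF v, of 1] N_ge_1 low by simp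
  moreover have "(\<Sum>n\<in>inst_winner N K v. wbar Kn X P n (v n)) = of_bool (2 \<le> N)"
    using low wbar_inst[OF v, of 2] by (simp add: inst_winner_def)
  ultimately show False using buyers_cases by auto
qed

lemma realized_value_le_inst:
  assumes O: "optimal_rule N Kn X P \<A> \<pi>'" and v: "v \<in> profiles N Kn"
  shows "(\<Sum>n\<in>{1..N}. Qn \<A> \<pi>' n v * X n (v n)) \<le> (if v 1 = K then r else of_bool (2 \<le> N))"
proof -
  have A: "alloc_rule N Kn \<A> \<pi>'" using O by (simp add: optimal_rule_def)
  have "(\<Sum>n\<in>{1..N}. Qn \<A> \<pi>' n v * X n (v n)) = (\<Sum>n\<in>{1..N}. \<pi>' v {n} * X n (v n))"
    by (intro sum.cong) (auto simp: Qn_single_item)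
  also have "\<dots> \<le> (if v 1 = K then r else of_bool (2 \<le> N))"
  proof (rule weighted_sum_le)
    show "\<forall>n\<in>{1..N}. 0 \<le> \<pi>' v {n}" using A v by (simp add: alloc_rule_def)
    show "sum (\<lambda>n. \<pi>' v {n}) {1..N} \<le> 1" by (rule single_item_sales_le_1[OF A v])
    show "0 \<le> (if v 1 = K then r else of_bool (2 \<le> N))" using r_gt_1 by simp
    show "\<forall>n\<in>{1..N}. \<pi>' v {n} \<noteq> 0 \<longrightarrow> X n (v n) \<le> (if v 1 = K then r else of_bool (2 \<le> N))"
      using optimal_rule_never_sells_low_buyer1[OF O v] inst_profileD[OF v] grid_le_r r_gt_1
      by (auto simp: inst_x_def)
  qed
  finally show ?thesis .
qed

lemma welfare_le_inst_rule:
  "\<forall>\<pi>'. optimal_rule N Kn X P \<A> \<pi>' \<longrightarrow> welfare N Kn X P \<A> \<pi>' \<le> welfare N Kn X P \<A> \<pi>"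
proof (intro allI impI)
  fix \<pi>' assume O: "optimal_rule N Kn X P \<A> \<pi>'"
  show "welfare N Kn X P \<A> \<pi>' \<le> welfare N Kn X P \<A> \<pi>"
    unfolding welfare_def
  proof (rule sum_mono)
    fix v assume v: "v \<in> profiles N Kn"
    have "0 \<le> prof_prob N P v"
      using inst_p_pos inst_profileD(1)[OF v] by (simp add: prof_prob_inst less_imp_le)
    then show "prof_prob N P v * (\<Sum>n\<in>{1..N}. Qn \<A> \<pi>' n v * X n (v n))
        \<le> prof_prob N P v * (\<Sum>n\<in>{1..N}. Qn \<A> \<pi> n v * X n (v n))"
      unfolding realized_value_inst[OF v] by (rule mult_left_mono[OF realized_value_le_inst[OF O v]])
  qed
qed

lemma MSW_inst: "MSW N Kn X P = (\<Sum>i=1..K. P 1 i * x i)"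
proof -
  have "(MAX n\<in>{1..N}. X n (v n)) = x (v 1)" for v
    using N_ge_1 grid_ge_1 by (intro Max_eqI) (force simp: inst_x_def)+
  then have "MSW N Kn X P = (\<Sum>v\<in>profiles N Kn. P 1 (v 1) * x (v 1))"
    unfolding MSW_def by (simp add: prof_prob_inst)
  also have "\<dots> = (\<Sum>i=1..K. P 1 i * x i)" by (rule sum_profiles_inst)
  finally show ?thesis .
qed

lemma valid_inst: "valid_dist N r K Kn X P"
  unfolding valid_dist_def
proof (intro conjI ballI)
  fix n assume n: "n \<in> {1..N}"
  show "1 \<le> Kn n" "Kn n \<le> K" using K_ge_2 by (auto simp: inst_Kn_def)
  show "0 < X n 1" using grid_1 by (simp add: inst_x_def)
  show "X n i < X n (Suc i)" if "i \<in> {1..<Kn n}" for i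
    using that grid_strict_mono[of i "Suc i"] by (auto simp: inst_x_def inst_Kn_def split: if_splits)
  show "0 < P n i" if "i \<in> {1..Kn n}" for i
    using that inst_p_pos[of i] by (auto simp: inst_p_def inst_Kn_def split: if_splits)
  show "(\<Sum>i=1..Kn n. P n i) = 1"
    using sum_inst_p_atLeast1[of K] tail_Suc_K by (auto simp: inst_Kn_def inst_p_def)
next
  have "(MAX n\<in>{1..N}. X n (Kn n)) = r"
    using N_ge_1 grid_K r_gt_1 by (intro Max_eqI) (force simp: inst_x_def inst_Kn_def)+
  moreover have "(MIN n\<in>{1..N}. X n 1) = 1"
    using N_ge_1 grid_1 by (intro Min_eqI) (force simp: inst_x_def)+
  ultimately show "(MAX n\<in>{1..N}. X n (Kn n)) / (MIN n\<in>{1..N}. X n 1) \<le> r" by simp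
qed

lemma ELR_inst_ge:
  "(gamma_star r K - (1 - 1 / r)) / (1 + gamma_star r K) \<le> ELR N Kn X P \<A> \<pi>"
  unfolding ELR_def
proof (rule loss_ratio_ge)
  show "0 \<le> gamma_star r K" using r_gt_1 by (simp add: gamma_star_nonneg)
  show "1 + gamma_star r K \<le> MSW N Kn X P"
    unfolding MSW_inst by (rule expectation_ge_1_plus_gamma_star)
  show "0 \<le> welfare N Kn X P \<A> \<pi>"
    using valid_inst optimal_inst_rule by (intro welfare_nonneg) (auto simp: optimal_rule_def)
qed (use welfare_inst_rule_le r_gt_1 in auto)

end

theorem proposition9:
  fixes r :: real and N K :: nat
  assumes "r > 1" and "N \<ge> 1" and "K \<ge> 2"
  shows "eta N r K (single_item N) \<ge>
           (gamma_star r K - (1 - 1 / r)) / (1 + gamma_star r K)"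
proof -
  define a :: real where "a = (if N = 1 then 1 else 0)"
  interpret lower_bound_instance r K a N
    using assms by unfold_locales (auto simp: a_def)
  have "(gamma_star r K - (1 - 1 / r)) / (1 + gamma_star r K)
      \<le> ELR N (inst_Kn K) (inst_x r K) (inst_p r K a) (single_item N) (inst_rule N K)"
    by (rule ELR_inst_ge)
  also have "\<dots> \<le> eta N r K (single_item N)"
    using valid_inst optimal_inst_rule welfare_le_inst_rule assms(2) by (rule ELR_le_eta)
  finally show ?thesis .
qed

end
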